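(* Let $\mathcal H$ be an $n$-vertex linear hypergraph and let $\{A,B\}$ be a partition of the edge set of $\mathcal H$ such that $|A|+|B|-n \le |A|/4$. If for every two distinct intersecting edges $e,f\in A$ the pair $\{e,f\}$ is useful, then $\mathcal H$ has a proper edge-colouring with $n$ colours in which each colour is assigned to at most two edges.
   Context: A hypergraph has a finite vertex set and a set of nonempty edges; linear means any two distinct edges share at most one vertex. For an edge $e$, $N(e)$ denotes the set of edges $f\ne e$ of $\mathcal H$ with $f\cap e\ne\varnothing$. In an $n$-vertex hypergraph, a pair $\{e,f\}\subseteq\mathcal H$ is useful if $e\ne f$, $e\cap f\ne\varnothing$, and $|N(e)\cap N(f)|\le n-2$. A proper edge-colouring assigns colours to edges so that distinct intersecting edges get different colours. *)

theory Defs
  imports Complex_Main "HOL-Library.FuncSet"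
begin

definition hypergraph :: "'a set \<Rightarrow> 'a set set \<Rightarrow> bool" where
  "hypergraph V H \<longleftrightarrow> finite V \<and> (\<forall>e\<in>H. e \<noteq> {} \<and> e \<subseteq> V)"

definition linear_hg :: "'a set set \<Rightarrow> bool" where
  "linear_hg H \<longleftrightarrow> (\<forall>e\<in>H. \<forall>f\<in>H. e \<noteq> f \<longrightarrow> card (e \<inter> f) \<le> 1)"

definition nbhd :: "'a set set \<Rightarrow> 'a set \<Rightarrow> 'a set set" where
  "nbhd H e = {f \<in> H. f \<noteq> e \<and> f \<inter> e \<noteq> {}}"

definition useful :: "nat \<Rightarrow> 'a set set \<Rightarrow> 'a set \<Rightarrow> 'a set \<Rightarrow> bool" where
  "useful n H e f \<longleftrightarrow> e \<in> H \<and> f \<in> H \<and> e \<noteq> f \<and> e \<inter> f \<noteq> {}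
     \<and> int (card (nbhd H e \<inter> nbhd H f)) \<le> int n - 2"

definition proper_edge_colouring :: "'a set set \<Rightarrow> ('a set \<Rightarrow> 'c) \<Rightarrow> bool" where
  "proper_edge_colouring H c \<longleftrightarrow>
     (\<forall>e\<in>H. \<forall>f\<in>H. e \<noteq> f \<and> e \<inter> f \<noteq> {} \<longrightarrow> c e \<noteq> c f)"

end

theory Submission
  imports Defs "HOL-Library.Disjoint_Sets"
begin

text \<open>
  Take a maximum matching \<open>M\<close> in the graph on the edges of H in which two edges are
  adjacent when they are disjoint. If \<open>|H| \<le> n + |M|\<close>, colour each pair of \<open>M\<close> with one
  colour and every unmatched edge with a colour of its own. Otherwise, by maximality, the
  unmatched edges pairwise intersect, and since there is no augmenting path of length three, at
  most one unmatched edge avoids both members of a given pair of \<open>M\<close>. The size of \<open>A\<close> then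
  leaves two unmatched edges \<open>e, f \<in> A\<close> meeting some member of every pair. Their common
  neighbourhood contains all other unmatched edges and one member of each pair, so it has at
  least \<open>|H| - |M| - 2 \<ge> n - 1\<close> elements, contradicting usefulness of \<open>{e, f}\<close>.
\<close>

definition matching :: "('b \<Rightarrow> 'b \<Rightarrow> bool) \<Rightarrow> 'b set \<Rightarrow> 'b set set \<Rightarrow> bool" where
  "matching R X M \<longleftrightarrow>
     (\<forall>s\<in>M. \<exists>x y. s = {x, y} \<and> x \<in> X \<and> y \<in> X \<and> x \<noteq> y \<and> R x y) \<and> disjoint M"

definition max_matching :: "('b \<Rightarrow> 'b \<Rightarrow> bool) \<Rightarrow> 'b set \<Rightarrow> 'b set set \<Rightarrow> bool" where
  "max_matching R X M \<longleftrightarrow> matching R X M \<and> (\<forall>M'. matching R X M' \<longrightarrow> card M' \<le> card M)"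

lemma matching_subset_Pow: "matching R X M \<Longrightarrow> M \<subseteq> Pow X"
  unfolding matching_def by auto

lemma finite_matching: "finite X \<Longrightarrow> matching R X M \<Longrightarrow> finite M"
  using matching_subset_Pow finite_Pow_iff finite_subset by metis

lemma matchingE:
  assumes "matching R X M" "s \<in> M"
  obtains x y where "s = {x, y}" "x \<in> X" "y \<in> X" "x \<noteq> y" "R x y"
  using assms unfolding matching_def by auto

lemma card_Union_matching:
  assumes "finite X" "matching R X M"
  shows "card (\<Union>M) = 2 * card M"
proof -
  have "card (\<Union>M) = sum card M"
  proof (rule card_Union_disjoint)
    show "disjoint M" using assms(2) by (simp add: matching_def)
    show "finite s" if "s \<in> M" for s
      using that assms(2) by (auto elim: matchingE)
  qed
  also have "\<dots> = sum (\<lambda>_. 2) M"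
    using assms(2) by (intro sum.cong) (auto elim: matchingE)
  finally show ?thesis by simp
qed

lemma max_matching_exists:
  assumes "finite X"
  obtains M where "max_matching R X M"
proof -
  have "matching R X {}" by (simp add: matching_def)
  moreover have "card M < Suc (card (Pow X))" if "matching R X M" for M
    using assms matching_subset_Pow[OF that] by (simp add: card_mono less_Suc_eq_le)
  ultimately obtain M where "matching R X M" "\<forall>M'. matching R X M' \<longrightarrow> card M' \<le> card M"
    using ex_has_greatest_nat[of "matching R X" "{}" card "Suc (card (Pow X))"] by blast
  then show ?thesis
    using that unfolding max_matching_def by auto
qed

lemma matching_insert:
  assumes "matching R X M" "x \<in> X - \<Union>M" "y \<in> X - \<Union>M" "x \<noteq> y" "R x y"
  shows "matching R X (insert {x, y} M)"
proof -
  have "disjnt {x, y} s \<and> disjnt s {x, y}" if "s \<in> M" for s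
    using that assms(2,3) by (auto simp: disjnt_def)
  moreover have "\<exists>a b. {x, y} = {a, b} \<and> a \<in> X \<and> b \<in> X \<and> a \<noteq> b \<and> R a b"
    using assms(2-5) by blast
  ultimately show ?thesis
    using assms(1) unfolding matching_def pairwise_insert by simp
qed

lemma matching_Diff: "matching R X M \<Longrightarrow> matching R X (M - N)"
  unfolding matching_def by (simp add: pairwise_subset[of _ M])

lemma matching_augment:
  assumes m: "matching R X M" and gh: "{g, h} \<in> M"
    and x: "x \<in> X - \<Union>M" and y: "y \<in> X - \<Union>M" and "x \<noteq> y" "R x g" "R y h"
  shows "matching R X (insert {x, g} (insert {y, h} (M - {{g, h}})))"
proof -
  obtain a b where "{g, h} = {a, b}" "a \<in> X" "b \<in> X" "a \<noteq> b"
    using matchingE[OF m gh] by metis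
  then have "g \<in> X" "h \<in> X" "g \<noteq> h"
    by (auto simp: doubleton_eq_iff)
  have "disjoint M"
    using m by (simp add: matching_def)
  then have "g \<notin> \<Union>(M - {{g, h}})" "h \<notin> \<Union>(M - {{g, h}})"
    using gh by (auto dest: pairwiseD simp: disjnt_def)
  have "matching R X (insert {y, h} (M - {{g, h}}))"
    using y gh \<open>h \<in> X\<close> \<open>h \<notin> \<Union>(M - {{g, h}})\<close> assms(7)
    by (intro matching_insert[OF matching_Diff[OF m]]) auto
  moreover have "x \<in> X - \<Union>(insert {y, h} (M - {{g, h}}))"
    using x y gh assms(5) by auto
  moreover have "g \<in> X - \<Union>(insert {y, h} (M - {{g, h}}))"
    using y gh \<open>g \<in> X\<close> \<open>g \<noteq> h\<close> \<open>g \<notin> \<Union>(M - {{g, h}})\<close> by auto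
  ultimately show ?thesis
    by (rule matching_insert) (use x gh assms(6) in auto)
qed

lemma max_matching_unmatched_unrelated:
  assumes "finite X" "max_matching R X M" "x \<in> X - \<Union>M" "y \<in> X - \<Union>M" "x \<noteq> y"
  shows "\<not> R x y"
proof
  assume "R x y"
  have larger: "matching R X (insert {x, y} M)"
    using matching_insert[of R X M x y] assms(2-5) \<open>R x y\<close> max_matching_def by auto
  have "finite M"
    using assms(1,2) finite_matching max_matching_def by metis
  moreover have "{x, y} \<notin> M"
    using assms(3) by auto
  ultimately have "card (insert {x, y} M) = Suc (card M)"
    by simp
  then show False
    using larger assms(2) unfolding max_matching_def by fastforce
qed

lemma max_matching_no_augmenting_path:
  assumes "finite X" "max_matching R X M" "{g, h} \<in> M"
    and "x \<in> X - \<Union>M" "y \<in> X - \<Union>M" "x \<noteq> y"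
  shows "\<not> (R x g \<and> R y h)"
proof
  assume "R x g \<and> R y h"
  then have "matching R X (insert {x, g} (insert {y, h} (M - {{g, h}})))"
    using matching_augment[of R X M g h x y] assms(2-6) max_matching_def by auto
  moreover have "card (insert {x, g} (insert {y, h} (M - {{g, h}}))) = Suc (card M)"
  proof -
    have "finite M"
      using assms(1,2) finite_matching max_matching_def by metis
    moreover have "{x, g} \<notin> insert {y, h} (M - {{g, h}})" "{y, h} \<notin> M - {{g, h}}"
      using assms(3-6) by (auto simp: doubleton_eq_iff)
    moreover have "card M > 0"
      using assms(3) \<open>finite M\<close> card_gt_0_iff by blast
    ultimately show ?thesis
      using assms(3) by (simp add: card_Diff_singleton)
  qed
  ultimately show False
    using assms(2) unfolding max_matching_def by fastforce
qed

lemma card_unmatched_related_to_pair_le: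
  assumes "finite X" "max_matching R X M"
  shows "card {x \<in> X - \<Union>M. \<exists>s\<in>M. \<forall>y\<in>s. R x y} \<le> card M"
proof -
  let ?B = "\<lambda>s. {x \<in> X - \<Union>M. \<forall>y\<in>s. R x y}"
  have m: "matching R X M" and fin: "finite M"
    using assms finite_matching max_matching_def by metis+
  have "card (?B s) \<le> 1" if s: "s \<in> M" for s
  proof -
    obtain g h where gh: "s = {g, h}"
      using matchingE[OF m s] by metis
    have "x = x'" if "x \<in> ?B s" "x' \<in> ?B s" for x x'
      using that max_matching_no_augmenting_path[OF assms, of g h x x'] s gh by auto
    moreover have "finite (?B s)"
      using assms(1) by simp
    ultimately show ?thesis
      using card_le_Suc0_iff_eq[of "?B s"] by (simp add: One_nat_def)
  qed
  then have "(\<Sum>s\<in>M. card (?B s)) \<le> card M"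
    using sum_mono[of M "\<lambda>s. card (?B s)" "\<lambda>_. 1"] by simp
  moreover have "{x \<in> X - \<Union>M. \<exists>s\<in>M. \<forall>y\<in>s. R x y} = (\<Union>s\<in>M. ?B s)"
    by auto
  ultimately show ?thesis
    using card_UN_le[OF fin, of ?B] by simp
qed

lemma max_matching_common_unrelated:
  assumes "finite X" "max_matching R X M" "s \<in> M"
    and "x \<in> X - \<Union>M" "y \<in> X - \<Union>M" "x \<noteq> y"
    and "\<exists>z\<in>s. \<not> R x z" "\<exists>z\<in>s. \<not> R y z"
  shows "\<exists>z\<in>s. \<not> R x z \<and> \<not> R y z"
proof -
  obtain g h where gh: "s = {g, h}"
    using matchingE assms(2,3) max_matching_def by metis
  then have "{g, h} \<in> M" "{h, g} \<in> M"
    using assms(3) by (auto simp: insert_commute)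
  then have "\<not> (R x g \<and> R y h)" "\<not> (R y g \<and> R x h)"
    using max_matching_no_augmenting_path[OF assms(1,2)] assms(4-6) by metis+
  then show ?thesis
    using assms(7,8) gh by auto
qed

lemma partition_colouring:
  assumes "partition_on X P" "finite X" "card P \<le> n"
  obtains c :: "'b \<Rightarrow> nat" where "c \<in> X \<rightarrow> {..<n}" "\<And>x. x \<in> X \<Longrightarrow> {y \<in> X. c y = c x} \<in> P"
proof -
  define r where "r = {(x, y). \<exists>p\<in>P. x \<in> p \<and> y \<in> p}"
  have r: "equiv X r" "X // r = P"
    using equiv_partition_on partition_on_eq_quotient assms(1) unfolding r_def by blast+
  have "finite P"
    using finite_elements assms(1,2) by blast
  then obtain b where b: "b \<in> P \<rightarrow> {..<n}" "inj_on b P"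
    using card_le_inj[of P "{..<n}"] assms(3) by auto
  define c where "c x = b (r `` {x})" for x
  have block: "r `` {x} \<in> P" if "x \<in> X" for x
    using quotientI[OF that, of r] r(2) by simp
  have "{y \<in> X. c y = c x} = r `` {x}" if x: "x \<in> X" for x
  proof -
    have "c y = c x \<longleftrightarrow> (x, y) \<in> r" if y: "y \<in> X" for y
      using inj_on_eq_iff[OF b(2) block[OF y] block[OF x]] eq_equiv_class_iff[OF r(1) x y]
      unfolding c_def by auto
    moreover have "r `` {x} \<subseteq> X"
      using r(1) equiv_type by blast
    ultimately show ?thesis
      by auto
  qed
  then show ?thesis
    using that[of c] b(1) block unfolding c_def by auto
qed

definition matching_blocks :: "'b set \<Rightarrow> 'b set set \<Rightarrow> 'b set set" where
  "matching_blocks X M = M \<union> (\<lambda>x. {x}) ` (X - \<Union>M)"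

lemma partition_on_matching_blocks:
  assumes "matching R X M"
  shows "partition_on X (matching_blocks X M)"
proof (rule partition_onI)
  have edge: "s \<subseteq> X" "s \<noteq> {}" if "s \<in> M" for s
    using matchingE[OF assms that] by (metis empty_not_insert insert_subset empty_subsetI)+
  have "disjoint M"
    using assms by (simp add: matching_def)
  then have disj: "s \<inter> t = {}" if "s \<in> M" "t \<in> M" "s \<noteq> t" for s t
    using that by (simp add: disjointD)
  show "\<Union>(matching_blocks X M) = X"
    using edge(1) unfolding matching_blocks_def by auto
  show "{} \<notin> matching_blocks X M"
    using edge(2) unfolding matching_blocks_def by auto
  show "disjnt p q" if "p \<in> matching_blocks X M" "q \<in> matching_blocks X M" "p \<noteq> q" for p q
    using that disj unfolding matching_blocks_def disjnt_def by auto
qed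

lemma card_matching_blocks:
  assumes "finite X" "matching R X M"
  shows "card (matching_blocks X M) + card M = card X"
proof -
  have fin: "finite M"
    using assms finite_matching by blast
  have "\<Union>M \<subseteq> X"
    using matching_subset_Pow[OF assms(2)] by blast
  then have "card (X - \<Union>M) + 2 * card M = card X"
    using card_Union_matching[OF assms] assms(1)
    by (metis card_Diff_subset card_mono finite_subset le_add_diff_inverse2)
  moreover have "M \<inter> (\<lambda>x. {x}) ` (X - \<Union>M) = {}"
    using assms(2) by (auto elim: matchingE)
  ultimately show ?thesis
    unfolding matching_blocks_def
    using assms(1) fin by (simp add: card_Un_disjoint card_image)
qed

lemma matching_blocks_card_le_2:
  assumes "matching R X M" "p \<in> matching_blocks X M"
  shows "card p \<le> 2"
proof -
  consider "p \<in> M" | x where "p = {x}"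
    using assms(2) unfolding matching_blocks_def by blast
  then show ?thesis
  proof cases
    case 1
    then obtain x y where "p = {x, y}"
      using matchingE[OF assms(1)] by metis
    then show ?thesis
      by (simp add: card_insert_if)
  next
    case 2
    then show ?thesis by simp
  qed
qed

lemma matching_blocks_related:
  assumes "matching R X M" "p \<in> matching_blocks X M" "x \<in> p" "y \<in> p" "x \<noteq> y"
  shows "R x y \<or> R y x"
proof -
  have "p \<in> M"
    using assms(2-5) unfolding matching_blocks_def by auto
  then obtain a b where "p = {a, b}" "R a b"
    using matchingE[OF assms(1)] by metis
  then show ?thesis
    using assms(3-5) by auto
qed

lemma matching_colouring:
  assumes "finite X" "matching R X M" "card X \<le> n + card M"
  obtains c :: "'b \<Rightarrow> nat" where "c \<in> X \<rightarrow> {..<n}"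
    "\<And>x y. x \<in> X \<Longrightarrow> y \<in> X \<Longrightarrow> x \<noteq> y \<Longrightarrow> c x = c y \<Longrightarrow> R x y \<or> R y x"
    "\<And>i. card {x \<in> X. c x = i} \<le> 2"
proof -
  have "card (matching_blocks X M) \<le> n"
    using card_matching_blocks[OF assms(1,2)] assms(3) by linarith
  then obtain c :: "'b \<Rightarrow> nat" where c: "c \<in> X \<rightarrow> {..<n}"
    and fibre: "\<And>x. x \<in> X \<Longrightarrow> {y \<in> X. c y = c x} \<in> matching_blocks X M"
    by (rule partition_colouring[OF partition_on_matching_blocks[OF assms(2)] assms(1)]) blast
  show ?thesis
  proof (rule that[of c])
    show "c \<in> X \<rightarrow> {..<n}"
      by (rule c)
    show "R x y \<or> R y x" if "x \<in> X" "y \<in> X" "x \<noteq> y" "c x = c y" for x y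
      using matching_blocks_related[OF assms(2) fibre[OF that(1)], of x y] that by auto
    show "card {x \<in> X. c x = i} \<le> 2" for i
    proof (cases "\<exists>x\<in>X. c x = i")
      case True
      then obtain x where "x \<in> X" "c x = i" by blast
      then show ?thesis
        using matching_blocks_card_le_2[OF assms(2) fibre] by blast
    next
      case False
      then have empty: "{x \<in> X. c x = i} = {}" by blast
      show ?thesis unfolding empty by simp
    qed
  qed
qed

lemma card_le_common_nbhd:
  assumes "finite H" "max_matching disjnt H M"
    and "e \<in> H - \<Union>M" "f \<in> H - \<Union>M" "e \<noteq> f"
    and "\<forall>s\<in>M. \<exists>y\<in>s. \<not> disjnt e y" "\<forall>s\<in>M. \<exists>y\<in>s. \<not> disjnt f y"
  shows "card H \<le> card (nbhd H e \<inter> nbhd H f) + card M + 2"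
proof -
  let ?N = "nbhd H e \<inter> nbhd H f"
  define L where "L = H - \<Union>M - {e, f}"
  have m: "matching disjnt H M"
    using assms(2) by (simp add: max_matching_def)
  have "\<Union>M \<subseteq> H"
    using matching_subset_Pow[OF m] by blast
  have "finite ?N"
    using assms(1) by (simp add: nbhd_def)
  have "L \<subseteq> ?N"
  proof
    fix x assume x: "x \<in> L"
    then have "\<not> disjnt x e" "\<not> disjnt x f"
      using max_matching_unmatched_unrelated[OF assms(1,2)] assms(3,4) unfolding L_def by blast+
    then show "x \<in> ?N"
      using x unfolding L_def nbhd_def disjnt_def by auto
  qed
  have "\<exists>y\<in>s. \<not> disjnt e y \<and> \<not> disjnt f y" if "s \<in> M" for s
    by (rule max_matching_common_unrelated[OF assms(1,2) that assms(3-5)])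
      (use assms(6,7) that in auto)
  then obtain \<phi> where \<phi>: "\<And>s. s \<in> M \<Longrightarrow> \<phi> s \<in> s \<and> \<not> disjnt e (\<phi> s) \<and> \<not> disjnt f (\<phi> s)"
    by metis
  have "\<phi> s \<in> ?N" if "s \<in> M" for s
  proof -
    have "\<phi> s \<in> \<Union>M"
      using \<phi>[OF that] that by blast
    then show ?thesis
      using \<phi>[OF that] \<open>\<Union>M \<subseteq> H\<close> assms(3,4)
      unfolding nbhd_def disjnt_def by (auto simp: Int_commute)
  qed
  then have "\<phi> ` M \<subseteq> ?N"
    by blast
  moreover have "inj_on \<phi> M"
  proof (rule inj_onI)
    fix s t assume "s \<in> M" "t \<in> M" "\<phi> s = \<phi> t"
    then show "s = t"
      using \<phi> m unfolding matching_def by (metis disjointD disjoint_iff)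
  qed
  moreover have "L \<inter> \<phi> ` M = {}"
    using \<phi> unfolding L_def by fastforce
  moreover have "finite L" "finite M"
    using assms(1) finite_matching[OF assms(1) m] unfolding L_def by simp_all
  ultimately have "card (L \<union> \<phi> ` M) = card L + card M"
    by (simp add: card_Un_disjoint card_image)
  moreover have "card (L \<union> \<phi> ` M) \<le> card ?N"
    using \<open>L \<subseteq> ?N\<close> \<open>\<phi> ` M \<subseteq> ?N\<close> \<open>finite ?N\<close> by (intro card_mono) auto
  ultimately have "card L + card M \<le> card ?N"
    by simp
  moreover have "card H = card (\<Union>M) + card L + 2"
  proof -
    have "card H = card (\<Union>M) + card (H - \<Union>M)"
      using \<open>\<Union>M \<subseteq> H\<close> assms(1) by (metis card_Diff_subset card_mono finite_subset le_add_diff_inverse)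
    moreover have "card (H - \<Union>M) = card L + 2"
    proof -
      have "{e, f} \<subseteq> H - \<Union>M"
        using assms(3,4) by blast
      then have "card L = card (H - \<Union>M) - 2" "2 \<le> card (H - \<Union>M)"
        using assms(1,5) card_mono[of "H - \<Union>M" "{e, f}"]
        unfolding L_def by (simp_all add: card_Diff_subset)
      then show ?thesis by linarith
    qed
    ultimately show ?thesis by simp
  qed
  ultimately show ?thesis
    using card_Union_matching[OF assms(1) m] by linarith
qed

lemma card_le_plus_card_max_matching:
  assumes "finite H" "A \<subseteq> H" "4 * card H \<le> card A + 4 * n"
    and useful: "\<forall>e\<in>A. \<forall>f\<in>A. e \<noteq> f \<and> e \<inter> f \<noteq> {} \<longrightarrow> useful n H e f"
    and max: "max_matching disjnt H M"
  shows "card H \<le> n + card M"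
proof (rule ccontr)
  assume "\<not> card H \<le> n + card M"
  then have large: "4 * card M + 4 \<le> card A"
    using assms(3) by linarith
  define Bad where "Bad = {x \<in> H - \<Union>M. \<exists>s\<in>M. \<forall>y\<in>s. disjnt x y}"
  define A' where "A' = A - \<Union>M - Bad"
  have m: "matching disjnt H M"
    using max by (simp add: max_matching_def)
  have "finite A'" "finite (\<Union>M)" "finite Bad"
    using assms(1,2) matching_subset_Pow[OF m]
    unfolding A'_def Bad_def by (auto intro: finite_subset)
  moreover have "A \<subseteq> A' \<union> \<Union>M \<union> Bad"
    unfolding A'_def by blast
  ultimately have "card A \<le> card (A' \<union> \<Union>M \<union> Bad)"
    by (intro card_mono) auto
  also have "\<dots> \<le> card (A' \<union> \<Union>M) + card Bad"
    by (rule card_Un_le)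
  also have "\<dots> \<le> card A' + card (\<Union>M) + card Bad"
    using card_Un_le[of A' "\<Union>M"] by simp
  finally have "card A \<le> card A' + card (\<Union>M) + card Bad" .
  moreover have "card Bad \<le> card M"
    using card_unmatched_related_to_pair_le[OF assms(1) max] unfolding Bad_def .
  ultimately have "\<not> card A' \<le> Suc 0"
    using large card_Union_matching[OF assms(1) m] by linarith
  then obtain e f where ef: "e \<in> A'" "f \<in> A'" "e \<noteq> f"
    using card_le_Suc0_iff_eq[OF \<open>finite A'\<close>] by blast
  then have unmatched: "e \<in> H - \<Union>M" "f \<in> H - \<Union>M"
    and touching: "\<forall>s\<in>M. \<exists>y\<in>s. \<not> disjnt e y" "\<forall>s\<in>M. \<exists>y\<in>s. \<not> disjnt f y"
    using assms(2) unfolding A'_def Bad_def by auto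
  have "e \<inter> f \<noteq> {}"
    using max_matching_unmatched_unrelated[OF assms(1) max unmatched ef(3)]
    by (simp add: disjnt_def)
  then have "int (card (nbhd H e \<inter> nbhd H f)) \<le> int n - 2"
    using useful ef unfolding A'_def useful_def by blast
  moreover have "card H \<le> card (nbhd H e \<inter> nbhd H f) + card M + 2"
    using card_le_common_nbhd[OF assms(1) max unmatched ef(3) touching] .
  ultimately show False
    using \<open>\<not> card H \<le> n + card M\<close> by linarith
qed

theorem proposition5p4:
  fixes V :: "'a set" and H A B :: "'a set set" and n :: nat
  assumes "hypergraph V H" and "card V = n" and "linear_hg H"
    and "A \<union> B = H" and "A \<inter> B = {}"
    and "real (card A) + real (card B) - real n \<le> real (card A) / 4"
    and "\<forall>e\<in>A. \<forall>f\<in>A. e \<noteq> f \<and> e \<inter> f \<noteq> {} \<longrightarrow> useful n H e f"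
  shows "\<exists>c :: 'a set \<Rightarrow> nat. c \<in> H \<rightarrow> {..<n} \<and> proper_edge_colouring H c
           \<and> (\<forall>i<n. card {e \<in> H. c e = i} \<le> 2)"
proof -
  have "H \<subseteq> Pow V" "finite V"
    using assms(1) unfolding hypergraph_def by auto
  then have "finite H"
    by (simp add: finite_subset)
  then have "card H = card A + card B"
    using assms(4,5) card_Un_disjoint[of A B] by auto
  then have "4 * card H \<le> card A + 4 * n"
    using assms(6) by linarith
  obtain M where max: "max_matching disjnt H M"
    using max_matching_exists[OF \<open>finite H\<close>] .
  have "matching disjnt H M"
    using max by (simp add: max_matching_def)
  moreover have "card H \<le> n + card M"
    using card_le_plus_card_max_matching[OF \<open>finite H\<close> _ \<open>4 * card H \<le> card A + 4 * n\<close> assms(7) max]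
      assms(4) by blast
  ultimately obtain c :: "'a set \<Rightarrow> nat" where "c \<in> H \<rightarrow> {..<n}"
    and same_colour: "\<And>e f. e \<in> H \<Longrightarrow> f \<in> H \<Longrightarrow> e \<noteq> f \<Longrightarrow> c e = c f \<Longrightarrow> disjnt e f \<or> disjnt f e"
    and "\<And>i. card {e \<in> H. c e = i} \<le> 2"
    by (rule matching_colouring[OF \<open>finite H\<close>]) blast
  moreover have "proper_edge_colouring H c"
    using same_colour unfolding proper_edge_colouring_def disjnt_def by blast
  ultimately show ?thesis
    by blast
qed

end
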